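(* Let $0<q<1$ and $0\le p<1$. Let $\tilde P_n(x)=\sum_{k=0}^n\tilde b_{k,n}x^k$ ($n\ge0$) be the orthonormal polynomials (with positive leading coefficients) associated with the moment sequence $(\tilde s_n)$, and let $P_n(x;p,q)=\sum_{k=0}^n b_{k,n}x^k$ with $b_{k,n}$ as in the context. Then for $0\le k\le n$, \[ \tilde b_{k,n}=\tilde C_n (-1)^k\begin{bmatrix}n\\k\end{bmatrix}_q \frac{q^{k^2+k/2}}{(p;q)_k} \left[1-\frac{1-q^k}{1-pq^k}\frac{(q^{n+1};q)_\infty}{(pq^{n+1};q)_\infty}\right], \] where \[ \tilde C_n=(-1)^nq^{n/2+1/4}\sqrt{\frac{(p;q)_n}{(q;q)_n}} \left[\left(1-\frac{(q^n;q)_\infty}{(pq^n;q)_\infty}\right)\left(1-\frac{(q^{n+1};q)_\infty}{(pq^{n+1};q)_\infty}\right)\right]^{-1/2} =(-1)^nq^{n/2+1/4}\sqrt{\frac{(p;q)_{n+1}}{(q;q)_n}}\, \frac{(pq^{n+1};q)_\infty}{\sqrt{\Delta_n\Delta_{n+1}}}, \] i.e. \[ \tilde b_{k,n}=b_{k,n} \left[(pq^{n+1};q)_\infty-\frac{1-q^k}{1-pq^k}(q^{n+1};q)_\infty\right] \sqrt{\frac{1-pq^n}{\Delta_n\Delta_{n+1}}}. \] Moreover, for all $n\ge0$, \[ \tilde D_n=\frac{\Delta_{n+1}}{(pq^{n+1};q)_\infty}D_n, \] where $D_n=\det(s_{i+j})_{0\le i,j\le n}$ and $\tilde D_n=\det(\tilde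 s_{i+j})_{0\le i,j\le n}$.
   Context: For $a\in\mathbb C$ and $n\in\{0,1,\dots\}\cup\{\infty\}$, $(a;q)_n=\prod_{k=1}^n(1-aq^{k-1})$; $\begin{bmatrix}n\\k\end{bmatrix}_q=\frac{(q;q)_n}{(q;q)_k(q;q)_{n-k}}$. Set $\Delta_n=(pq^n;q)_\infty-(q^n;q)_\infty$ for $n\ge0$. The generalized Stieltjes–Wigert moments are $s_n=(p;q)_nq^{-(n+1)^2/2}$, $n\ge0$; the modified moments are $\tilde s_0=q^{-1/2}\bigl[1-(q;q)_\infty/(pq;q)_\infty\bigr]$ and $\tilde s_n=s_n$ for $n\ge1$ (these are the moments of the measure obtained from the N-extremal solution of the $(s_n)$ moment problem by removing its mass $(q;q)_\infty/(\sqrt q\,(pq;q)_\infty)$ at $0$). The orthonormal polynomials for a positive definite moment sequence $(u_n)$ are $P_n(x)=\frac{1}{\sqrt{E_{n-1}E_n}}\det\begin{pmatrix}u_0&\cdots&u_n\\ \vdots&&\vdots\\ u_{n-1}&\cdots&u_{2n-1}\\ 1&\cdots&x^n\end{pmatrix}$ with $E_n=\det(u_{i+j})_{0\le i,j\le n}$, $E_{-1}=1$. The orthonormal polynomials for $(s_n)$ are $P_n(x;p,q)=\sum_{k=0}^n b_{k,n}x^k$ with $b_{k,n}=(-1)^nq^{n/2+1/4}\sqrt{\frac{(p;q)_n}{(q;q)_n}}(-1)^k\begin{bmatrix}n\\k\end{bmatrix}_q\frac{q^{k^2+k/2}}{(p;q)_k}$. *)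

theory Defs
  imports "HOL-Analysis.Infinite_Products" "Jordan_Normal_Form.Determinant"
begin

definition qpoch :: "real \<Rightarrow> real \<Rightarrow> nat \<Rightarrow> real" where
  "qpoch a q n = (\<Prod>k=1..n. 1 - a * q ^ (k - 1))"

definition qpoch_inf :: "real \<Rightarrow> real \<Rightarrow> real" where
  "qpoch_inf a q = (\<Prod>k. 1 - a * q ^ k)"

definition qbinom :: "nat \<Rightarrow> nat \<Rightarrow> real \<Rightarrow> real" where
  "qbinom n k q = qpoch q q n / (qpoch q q k * qpoch q q (n - k))"

definition Delta :: "real \<Rightarrow> real \<Rightarrow> nat \<Rightarrow> real" where
  "Delta p q n = qpoch_inf (p * q ^ n) q - qpoch_inf (q ^ n) q"

definition sw_moment :: "real \<Rightarrow> real \<Rightarrow> nat \<Rightarrow> real" where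
  "sw_moment p q n = qpoch p q n * q powr (- (real (n + 1) ^ 2) / 2)"

definition sw_moment_mod :: "real \<Rightarrow> real \<Rightarrow> nat \<Rightarrow> real" where
  "sw_moment_mod p q n =
     (if n = 0 then q powr (-1/2) * (1 - qpoch_inf q q / qpoch_inf (p * q) q)
      else sw_moment p q n)"

definition hankel_det :: "(nat \<Rightarrow> real) \<Rightarrow> nat \<Rightarrow> real" where
  "hankel_det u n = det (mat (n + 1) (n + 1) (\<lambda>(i, j). u (i + j)))"

definition hankel_det_prev :: "(nat \<Rightarrow> real) \<Rightarrow> nat \<Rightarrow> real" where
  "hankel_det_prev u n = (if n = 0 then 1 else hankel_det u (n - 1))"

definition orthonormal_poly :: "(nat \<Rightarrow> real) \<Rightarrow> nat \<Rightarrow> real poly" where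
  "orthonormal_poly u n =
     smult (1 / sqrt (hankel_det_prev u n * hankel_det u n))
       (det (mat (n + 1) (n + 1)
          (\<lambda>(i, j). if i < n then [: u (i + j) :] else monom 1 j)))"

definition sw_coeff :: "real \<Rightarrow> real \<Rightarrow> nat \<Rightarrow> nat \<Rightarrow> real" where
  "sw_coeff p q k n =
     (-1) ^ n * q powr (real n / 2 + 1/4) * sqrt (qpoch p q n / qpoch q q n)
     * (-1) ^ k * qbinom n k q * q powr (real k ^ 2 + real k / 2) / qpoch p q k"

end

theory Submission
  imports Defs
begin

text \<open>
  Write \<open>g\<^sub>k\<close> for \<open>b\<^sub>k\<^sub>,\<^sub>n\<close> without its factor depending only on \<open>n\<close>. The product
  \<open>g\<^sub>k s\<^sub>m\<^sub>+\<^sub>k\<close> is, up to a factor depending only on \<open>m\<close>, the \<open>k\<close>-th term of an \<open>n\<close>-th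
  \<open>q\<close>-difference (Rothe's \<open>q\<close>-binomial theorem) of the monic polynomial with roots \<open>p q\<^sup>i\<close>,
  \<open>i < m\<close>, taken at \<open>q\<^sup>-\<^sup>k\<close>; hence \<open>\<Sum>\<^sub>k g\<^sub>k s\<^sub>m\<^sub>+\<^sub>k\<close> vanishes for \<open>m < n\<close>. Twisting
  \<open>g\<^sub>k\<close> by \<open>(1 - q\<^sup>k)/(1 - p q\<^sup>k)\<close> gives the same with roots \<open>1, p q, \<dots>, p q\<^sup>m\<close> for
  \<open>m \<ge> 1\<close>, while for \<open>m = 0\<close> a partial fraction identity evaluates the sum. Since the
  modified moments \<open>s'\<close> differ from \<open>s\<close> only at index \<open>0\<close>, the combination
  \<open>g\<^sub>k (1 - (1 - q\<^sup>k)/(1 - p q\<^sup>k) A\<^sub>n\<^sub>+\<^sub>1)\<close> with \<open>A\<^sub>j = (q\<^sup>j;q)\<^sub>\<infinity>/(p q\<^sup>j;q)\<^sub>\<infinity>\<close> is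
  orthogonal to \<open>1, \<dots>, x\<^sup>n\<^sup>-\<^sup>1\<close> for \<open>s'\<close>: at \<open>m = 0\<close> the twisted sum compensates
  exactly for the mass removed at the origin.

  For any moment sequence, a column elimination in the determinants defining \<open>P\<^sub>n\<close> and
  \<open>D\<^sub>n\<close> shows that orthogonal coefficient vectors determine both the coefficients of \<open>P\<^sub>n\<close> and
  the ratio \<open>D\<^sub>n / D\<^sub>n\<^sub>-\<^sub>1\<close>; comparing these ratios for \<open>s'\<close> and \<open>s\<close> and using \<open>A\<^sub>0 = 0\<close>
  gives \<open>D'\<^sub>n = (1 - A\<^sub>n\<^sub>+\<^sub>1) D\<^sub>n\<close>.
\<close>

section \<open>Hankel determinants and orthonormal polynomials\<close>

text \<open>Adding \<open>c j\<close> times column \<open>j\<close> to the last column (a unitriangular column operation)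
  kills every entry of that column except the one in row \<open>n\<close>.\<close>
lemma det_last_column_elimination:
  fixes A :: "'a::comm_ring_1 mat" and c :: "nat \<Rightarrow> 'a"
  assumes A: "A \<in> carrier_mat (Suc n) (Suc n)" and cn: "c n = 1"
    and rows: "\<And>i. i < n \<Longrightarrow> (\<Sum>j\<le>n. A $$ (i,j) * c j) = 0"
  shows "det A = (\<Sum>j\<le>n. A $$ (n,j) * c j) * det (mat n n (\<lambda>(i,j). A $$ (i,j)))"
proof -
  define C where
    "C = mat (Suc n) (Suc n) (\<lambda>(i,j). if j = n then c i else if i = j then 1 else (0::'a))"
  have C: "C \<in> carrier_mat (Suc n) (Suc n)" unfolding C_def by simp
  have "diag_mat C = replicate (Suc n) 1"
    unfolding C_def diag_mat_def using cn
    by (intro nth_equalityI) (auto simp: nth_append nth_Cons split: nat.split)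
  moreover have "upper_triangular C" unfolding C_def upper_triangular_def by auto
  ultimately have "det C = 1" using det_upper_triangular[OF _ C] by simp
  define B where "B = A * C"
  have B: "B \<in> carrier_mat (Suc n) (Suc n)" unfolding B_def using A C by simp
  have det_B: "det B = det A" unfolding B_def using det_mult[OF A C] \<open>det C = 1\<close> by simp
  have B_entry: "B $$ (i,j) = (if j = n then (\<Sum>k\<le>n. A $$ (i,k) * c k) else A $$ (i,j))"
    if "i < Suc n" "j < Suc n" for i j
  proof -
    have "B $$ (i,j) = (\<Sum>k<Suc n. A $$ (i,k) * C $$ (k,j))"
      unfolding B_def using that A C by (simp add: scalar_prod_def row_def col_def lessThan_atLeast0)
    also have "\<dots> = (if j = n then (\<Sum>k\<le>n. A $$ (i,k) * c k) else A $$ (i,j))"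
    proof (cases "j = n")
      case True
      then show ?thesis unfolding C_def by (simp add: lessThan_Suc_atMost)
    next
      case False
      have "(\<Sum>k<Suc n. A $$ (i,k) * C $$ (k,j)) = (\<Sum>k<Suc n. if k = j then A $$ (i,j) else 0)"
        by (rule sum.cong) (auto simp: C_def False that)
      then show ?thesis using False that by simp
    qed
    finally show ?thesis .
  qed
  have "mat_delete B n n = mat n n (\<lambda>(i,j). A $$ (i,j))"
    by (rule eq_matI) (use B in \<open>auto simp: mat_delete_def B_entry\<close>)
  then have minor: "cofactor B n n = det (mat n n (\<lambda>(i,j). A $$ (i,j)))"
    unfolding cofactor_def by simp
  have "det B = (\<Sum>i<Suc n. B $$ (i,n) * cofactor B i n)"
    by (rule laplace_expansion_column[OF B]) simp
  also have "\<dots> = B $$ (n,n) * cofactor B n n"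
    using B_entry rows by (simp add: lessThan_Suc)
  finally show ?thesis using det_B B_entry minor by simp
qed

text \<open>\<open>moment_pairing u m n g\<close> is \<open>L(x\<^sup>m \<Sum>\<^sub>k\<^sub>\<le>\<^sub>n g\<^sub>k x\<^sup>k)\<close> for the moment functional \<open>L(x\<^sup>i) = u i\<close>.\<close>
definition moment_pairing :: "(nat \<Rightarrow> real) \<Rightarrow> nat \<Rightarrow> nat \<Rightarrow> (nat \<Rightarrow> real) \<Rightarrow> real" where
  "moment_pairing u m n g = (\<Sum>k\<le>n. u (m + k) * g k)"

definition orthogonal_coeffs :: "(nat \<Rightarrow> real) \<Rightarrow> nat \<Rightarrow> (nat \<Rightarrow> real) \<Rightarrow> bool" where
  "orthogonal_coeffs u n g \<longleftrightarrow> g n \<noteq> 0 \<and> (\<forall>m<n. moment_pairing u m n g = 0)"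

lemma moment_pairing_diff:
  "moment_pairing u m n (\<lambda>k. f k - c * h k) = moment_pairing u m n f - c * moment_pairing u m n h"
  by (simp add: moment_pairing_def sum_subtractf sum_distrib_left algebra_simps)

lemma moment_pairing_fun_upd_0:
  "moment_pairing (u(0 := a)) m n g
     = moment_pairing u m n g + (if m = 0 then (a - u 0) * g 0 else 0)"
proof -
  have "(u(0 := a)) (m + k) * g k = u (m + k) * g k + (if m + k = 0 then (a - u 0) * g 0 else 0)" for k
    by (simp add: algebra_simps)
  then show ?thesis by (simp add: moment_pairing_def sum.distrib)
qed

lemma det_hankel_minor: "det (mat n n (\<lambda>(i,j). u (i + j))) = hankel_det_prev u n"
  by (cases n) (simp_all add: hankel_det_prev_def hankel_det_def)

lemma orthogonal_coeffs_kernel: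
  assumes "orthogonal_coeffs u n g" "i < n"
  shows "(\<Sum>j\<le>n. u (i + j) * (g j / g n)) = 0"
proof -
  have "(\<Sum>j\<le>n. u (i + j) * (g j / g n)) = moment_pairing u i n g / g n"
    by (simp add: moment_pairing_def sum_divide_distrib)
  then show ?thesis using assms by (simp add: orthogonal_coeffs_def)
qed

lemma hankel_det_eq_pairing_mult_prev:
  assumes orth: "orthogonal_coeffs u n g"
  shows "hankel_det u n = moment_pairing u n n g / g n * hankel_det_prev u n"
proof -
  define A where "A = mat (Suc n) (Suc n) (\<lambda>(i, j). u (i + j))"
  have "det A = (\<Sum>j\<le>n. A $$ (n,j) * (g j / g n)) * det (mat n n (\<lambda>(i,j). A $$ (i,j)))"
    using orth orthogonal_coeffs_kernel[OF orth]
    by (intro det_last_column_elimination) (auto simp: A_def orthogonal_coeffs_def)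
  moreover have "mat n n (\<lambda>(i,j). A $$ (i,j)) = mat n n (\<lambda>(i,j). u (i + j))"
    by (rule eq_matI) (auto simp: A_def)
  moreover have "(\<Sum>j\<le>n. A $$ (n,j) * (g j / g n)) = moment_pairing u n n g / g n"
    by (auto simp: A_def moment_pairing_def sum_divide_distrib intro!: sum.cong)
  ultimately show ?thesis
    by (simp add: hankel_det_def A_def det_hankel_minor)
qed

interpretation const_poly: comm_ring_hom "\<lambda>x::real. [:x:]"
  by unfold_locales (auto simp: one_pCons)

lemma det_orthonormal_poly_matrix:
  assumes orth: "orthogonal_coeffs u n g"
  shows "det (mat (n + 1) (n + 1) (\<lambda>(i, j). if i < n then [: u (i + j) :] else monom 1 j))
       = smult (hankel_det_prev u n / g n) (\<Sum>j\<le>n. monom (g j) j)"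
proof -
  define c where "c j = g j / g n" for j
  define P where
    "P = mat (Suc n) (Suc n) (\<lambda>(i, j). if i < n then [: u (i + j) :] else monom (1::real) j)"
  have "det P = (\<Sum>j\<le>n. P $$ (n,j) * [:c j:]) * det (mat n n (\<lambda>(i,j). P $$ (i,j)))"
  proof (rule det_last_column_elimination)
    fix i assume i: "i < n"
    have "(\<Sum>j\<le>n. P $$ (i, j) * [:c j:]) = (\<Sum>j\<le>n. [:u (i + j) * c j:])"
      using i by (intro sum.cong) (auto simp: P_def)
    also have "\<dots> = [:\<Sum>j\<le>n. u (i + j) * c j:]"
      by (rule sum_to_poly)
    also have "\<dots> = 0" using orthogonal_coeffs_kernel[OF orth i] by (simp add: c_def)
    finally show "(\<Sum>j\<le>n. P $$ (i, j) * [:c j:]) = 0" .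
  qed (use orth in \<open>simp_all add: P_def c_def orthogonal_coeffs_def one_pCons[symmetric]\<close>)
  moreover have "(\<Sum>j\<le>n. P $$ (n,j) * [:c j:]) = (\<Sum>j\<le>n. monom (c j) j)"
    by (intro sum.cong) (auto simp: P_def mult.commute[of "monom _ _"] smult_monom)
  moreover have "(\<Sum>j\<le>n. monom (c j) j) = smult (1 / g n) (\<Sum>j\<le>n. monom (g j) j)"
    by (rule poly_eqI) (simp add: c_def coeff_sum coeff_monom sum_divide_distrib if_distrib)
  moreover have "mat n n (\<lambda>(i,j). P $$ (i,j)) = map_mat (\<lambda>x. [:x:]) (mat n n (\<lambda>(i,j). u (i + j)))"
    by (rule eq_matI) (auto simp: P_def)
  ultimately have "det P = smult (1 / g n) (\<Sum>j\<le>n. monom (g j) j) * [:hankel_det_prev u n:]"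
    by (simp only: const_poly.hom_det det_hankel_minor)
  also have "\<dots> = smult (hankel_det_prev u n / g n) (\<Sum>j\<le>n. monom (g j) j)"
    by (simp add: mult.commute[of _ "[:_:]"])
  finally show ?thesis by (simp add: P_def)
qed

text \<open>Here \<open>g n * moment_pairing u n n g\<close> is the squared norm \<open>L(G\<^sup>2)\<close> of \<open>G = \<Sum> g\<^sub>k x\<^sup>k\<close>.\<close>
lemma hankel_det_pos:
  assumes "\<And>n. orthogonal_coeffs u n (g n)" and "\<And>n. g n n * moment_pairing u n n (g n) > 0"
  shows "hankel_det u n > 0"
proof -
  define r where "r n = moment_pairing u n n (g n) / g n n" for n
  have step: "hankel_det u n = r n * hankel_det_prev u n" and r_pos: "r n > 0" for n
    using hankel_det_eq_pairing_mult_prev[OF assms(1)] assms(2)[of n]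
    by (auto simp: r_def zero_less_mult_iff zero_less_divide_iff)
  show ?thesis
  proof (induction n)
    case 0
    show ?case using step[of 0] r_pos[of 0] by (simp add: hankel_det_prev_def)
  next
    case (Suc n)
    then show ?case using step[of "Suc n"] r_pos[of "Suc n"] by (simp add: hankel_det_prev_def)
  qed
qed

lemma coeff_orthonormal_poly:
  assumes orth: "orthogonal_coeffs u n g" and prev: "hankel_det_prev u n > 0"
    and norm: "g n * moment_pairing u n n g > 0" and "k \<le> n"
  shows "coeff (orthonormal_poly u n) k = sgn (g n) * g k / sqrt (g n * moment_pairing u n n g)"
proof -
  define E where "E = hankel_det_prev u n"
  define V where "V = g n * moment_pairing u n n g"
  have gn: "g n \<noteq> 0" using orth by (simp add: orthogonal_coeffs_def)
  have "E * hankel_det u n = (E / g n)\<^sup>2 * V"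
    unfolding hankel_det_eq_pairing_mult_prev[OF orth] E_def V_def
    by (simp add: power2_eq_square field_simps gn)
  then have sqrt_E: "sqrt (E * hankel_det u n) = E / \<bar>g n\<bar> * sqrt V"
    using prev by (simp add: E_def real_sqrt_mult)
  have "coeff (\<Sum>j\<le>n. monom (g j) j) k = g k"
    using \<open>k \<le> n\<close> by (simp add: coeff_sum coeff_monom)
  then have "coeff (orthonormal_poly u n) k = 1 / sqrt (E * hankel_det u n) * (E / g n * g k)"
    unfolding orthonormal_poly_def det_orthonormal_poly_matrix[OF orth]
    by (simp add: E_def mult.commute)
  also have "\<dots> = sgn (g n) * g k / sqrt V"
    unfolding sqrt_E using prev gn by (simp add: E_def sgn_if)
  finally show ?thesis unfolding V_def .
qed

section \<open>Finite \<open>q\<close>-Pochhammer symbols and Gaussian binomials\<close>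

lemma qpoch_0 [simp]: "qpoch a q 0 = 1"
  by (simp add: qpoch_def)

lemma qpoch_Suc: "qpoch a q (Suc n) = qpoch a q n * (1 - a * q ^ n)"
  by (simp add: qpoch_def)

lemma qpoch_add: "qpoch a q (k + m) = qpoch a q k * qpoch (a * q ^ k) q m"
  by (induction m) (simp_all add: qpoch_Suc power_add mult.assoc)

lemma qpoch_Suc_left: "qpoch a q (Suc n) = (1 - a) * qpoch (a * q) q n"
  using qpoch_add[of a q 1 n] by (simp add: qpoch_Suc)

lemma qpoch_pos:
  assumes "0 \<le> q" "q \<le> 1" "a < 1"
  shows "qpoch a q n > 0"
proof (induction n)
  case (Suc n)
  have "a * q ^ n < 1"
  proof (cases "a \<le> 0")
    case True
    then show ?thesis using assms by (smt (verit) mult_nonpos_nonneg zero_le_power)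
  next
    case False
    then have "a * q ^ n \<le> a" using assms by (simp add: mult_left_le power_le_one)
    then show ?thesis using assms by simp
  qed
  then show ?case using Suc by (simp add: qpoch_Suc)
qed simp

lemma qpoch_shift_mult_power:
  assumes "q \<noteq> 0"
  shows "qpoch (a * q ^ k) q m * (1/q) ^ (k * m) = (\<Prod>i<m. (1/q) ^ k - a * q ^ i)"
proof (induction m)
  case (Suc m)
  have "(1/q) ^ k * (1 - a * q ^ k * q ^ m) = (1/q) ^ k - a * q ^ m"
    using assms by (simp add: algebra_simps power_one_over)
  moreover have "qpoch (a * q ^ k) q (Suc m) * (1/q) ^ (k * Suc m)
      = (qpoch (a * q ^ k) q m * (1/q) ^ (k * m)) * ((1/q) ^ k * (1 - a * q ^ k * q ^ m))"
    by (simp add: qpoch_Suc power_add mult_ac)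
  ultimately show ?case using Suc by simp
qed simp

lemma qpoch_inverse_power_eq_0:
  assumes "q \<noteq> 0" "j < n"
  shows "qpoch ((1/q) ^ j) q n = 0"
  unfolding qpoch_def
  using assms by (intro prod_zero bexI[of _ "Suc j"]) (auto simp: power_one_over)

lemma Suc_choose_two: "Suc k choose 2 = (k choose 2) + k"
  by (simp add: numeral_2_eq_2)

lemma real_choose_two: "real (k choose 2) = real k * (real k - 1) / 2"
  by (induction k) (simp_all add: Suc_choose_two field_simps)

lemma qpoch_inverse_power_diag:
  assumes "q \<noteq> 0"
  shows "qpoch ((1/q) ^ n) q n = (-1) ^ n * (1/q) ^ (Suc n choose 2) * qpoch q q n"
proof (induction n)
  case (Suc n)
  have "(1/q) ^ Suc n * q = (1/q) ^ n" using assms by (simp add: field_simps)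
  then have "qpoch ((1/q) ^ Suc n) q (Suc n) = (1 - (1/q) ^ Suc n) * qpoch ((1/q) ^ n) q n"
    by (simp only: qpoch_Suc_left)
  also have "\<dots> = (-1) ^ Suc n * (1/q) ^ (Suc (Suc n) choose 2) * qpoch q q (Suc n)"
    unfolding Suc Suc_choose_two[of "Suc n"] using assms
    by (simp add: qpoch_Suc power_add field_simps)
  finally show ?case .
qed (simp add: numeral_2_eq_2)

lemma monic_linear_factors:
  fixes a :: "nat \<Rightarrow> 'a::idom"
  shows "degree (\<Prod>i<m. [:-a i, 1:]) = m" and "coeff (\<Prod>i<m. [:-a i, 1:]) m = 1"
proof -
  show deg: "degree (\<Prod>i<m. [:-a i, 1:]) = m"
    by (simp add: degree_prod_eq_sum_degree)
  show "coeff (\<Prod>i<m. [:-a i, 1:]) m = 1"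
    using lead_coeff_prod[of "\<lambda>i. [:-a i, 1:]" "{..<m}"] by (simp add: deg)
qed

text \<open>For \<open>k > n\<close> the Gaussian binomial of \<open>Defs\<close> is not zero (the subtraction \<open>n - k\<close> truncates);
  the zero extension makes Pascal's rule hold for all \<open>k\<close>.\<close>
definition qbinom_ext :: "real \<Rightarrow> nat \<Rightarrow> nat \<Rightarrow> real" where
  "qbinom_ext q n k = (if k \<le> n then qbinom n k q else 0)"

locale q_range =
  fixes q :: real
  assumes q_pos: "0 < q" and q_lt_1: "q < 1"
begin

lemma q_nonzero: "q \<noteq> 0"
  using q_pos by simp

lemma qpoch_q_pos: "qpoch q q n > 0"
  using q_pos q_lt_1 by (intro qpoch_pos) auto

lemma qbinom_ext_0 [simp]: "qbinom_ext q n 0 = 1"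
  using qpoch_q_pos[of n] by (simp add: qbinom_ext_def qbinom_def)

lemma qbinom_ext_pascal:
  assumes "k \<ge> 1"
  shows "qbinom_ext q (Suc n) k = qbinom_ext q n k + q ^ (Suc n - k) * qbinom_ext q n (k - 1)"
proof (cases "k \<le> n")
  case True
  obtain j where j: "k = Suc j" using assms by (cases k) auto
  then have "j \<le> n" using True by simp
  obtain m where m: "n = k + m" using True le_Suc_ex by blast
  define x y where "x = q ^ k" and "y = q ^ Suc m"
  have Qn: "qpoch q q (Suc n) = qpoch q q n * (1 - x * y)"
    using m by (simp add: x_def y_def qpoch_Suc power_add)
  have Qk: "qpoch q q k = qpoch q q j * (1 - x)" using j by (simp add: x_def qpoch_Suc)
  have Qm: "qpoch q q (Suc m) = qpoch q q m * (1 - y)" by (simp add: y_def qpoch_Suc)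
  have nz: "1 - x \<noteq> 0" "1 - y \<noteq> 0"
    using qpoch_q_pos[of k] qpoch_q_pos[of "Suc m"] Qk Qm by auto
  have idx: "Suc n - k = Suc m" "n - k = m" "k - 1 = j" "n - j = Suc m"
    using j m by auto
  have "qbinom_ext q (Suc n) k = qpoch q q (Suc n) / (qpoch q q k * qpoch q q (Suc m))"
    using True by (simp add: qbinom_ext_def qbinom_def idx)
  also have "\<dots> = qpoch q q n * (1 - x * y) / (qpoch q q j * (1 - x) * (qpoch q q m * (1 - y)))"
    unfolding Qn Qk Qm ..
  also have "\<dots> = qpoch q q n / (qpoch q q j * (1 - x) * qpoch q q m)
      + y * (qpoch q q n / (qpoch q q j * (qpoch q q m * (1 - y))))"
  proof -
    have "A * (1 - (1 - a) * (1 - b)) / (B * a * (C * b))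
        = A / (B * a * C) + (1 - b) * (A / (B * (C * b)))"
      if "a \<noteq> 0" "b \<noteq> 0" "B \<noteq> 0" "C \<noteq> 0" for A B C a b :: real
      using that by (simp add: field_simps)
    from this[of "1 - x" "1 - y"] show ?thesis using nz qpoch_q_pos[of j] qpoch_q_pos[of m] by simp
  qed
  also have "\<dots> = qbinom_ext q n k + q ^ (Suc n - k) * qbinom_ext q n (k - 1)"
    unfolding idx(1,3) using True \<open>j \<le> n\<close> by (simp add: qbinom_ext_def qbinom_def Qk Qm y_def idx(2,4))
  finally show ?thesis .
next
  case False
  then show ?thesis
    using qpoch_q_pos[of n] qpoch_q_pos[of "Suc n"]
    by (cases "k = Suc n") (auto simp: qbinom_ext_def qbinom_def)
qed

lemma qbinom_ext_absorb:
  "qbinom_ext q (Suc n) (Suc j) * (1 - q ^ Suc j) = (1 - q ^ Suc n) * qbinom_ext q n j"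
proof (cases "j \<le> n")
  case True
  then show ?thesis
    using qpoch_q_pos[of j] qpoch_q_pos[of "n - j"] qpoch_q_pos[of "Suc j"]
    by (simp add: qbinom_ext_def qbinom_def qpoch_Suc field_simps)
qed (simp add: qbinom_ext_def)

theorem qpoch_eq_qbinom_sum:
  "qpoch z q n = (\<Sum>k\<le>n. (-1) ^ k * qbinom_ext q n k * q ^ (k choose 2) * z ^ k)"
proof (induction n)
  case 0
  then show ?case by (simp add: numeral_2_eq_2)
next
  case (Suc n)
  define t where "t k = (-1) ^ k * qbinom_ext q n k * q ^ (k choose 2) * z ^ k" for k
  have t_Suc: "t (Suc n) = 0" by (simp add: t_def qbinom_ext_def)
  have t_0: "t 0 = 1" by (simp add: t_def numeral_2_eq_2)
  have pascal_term: "(-1) ^ Suc k * qbinom_ext q (Suc n) (Suc k) * q ^ (Suc k choose 2) * z ^ Suc k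
      = t (Suc k) - z * q ^ n * t k" if "k \<le> n" for k
  proof -
    have pascal: "qbinom_ext q (Suc n) (Suc k) = qbinom_ext q n (Suc k) + q ^ (n - k) * qbinom_ext q n k"
      using qbinom_ext_pascal[of "Suc k" n] by simp
    have "q ^ (n - k) * q ^ (Suc k choose 2) = q ^ n * q ^ (k choose 2)"
      using that by (simp add: Suc_choose_two flip: power_add)
    then show ?thesis
      unfolding pascal t_def by (simp add: algebra_simps)
  qed
  have "(\<Sum>k\<le>Suc n. (-1) ^ k * qbinom_ext q (Suc n) k * q ^ (k choose 2) * z ^ k)
      = 1 + (\<Sum>k\<le>n. (-1) ^ Suc k * qbinom_ext q (Suc n) (Suc k) * q ^ (Suc k choose 2) * z ^ Suc k)"
    by (subst sum.atMost_Suc_shift) (simp add: numeral_2_eq_2)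
  also have "\<dots> = 1 + (\<Sum>k\<le>n. t (Suc k) - z * q ^ n * t k)"
    by (intro arg_cong[where f = "(+) 1"] sum.cong refl pascal_term) simp
  also have "\<dots> = (\<Sum>k\<le>n. t k) - z * q ^ n * (\<Sum>k\<le>n. t k)"
  proof -
    have "(\<Sum>k\<le>n. t (Suc k)) = (\<Sum>k\<le>n. t k) - 1"
      using sum.atMost_Suc_shift[of t n] t_0 t_Suc by simp
    then show ?thesis by (simp add: sum_subtractf sum_distrib_left)
  qed
  also have "\<dots> = (1 - z * q ^ n) * qpoch z q n"
    by (simp add: Suc.IH t_def algebra_simps)
  finally show ?case by (simp add: qpoch_Suc mult.commute)
qed

lemma qbinom_sum_poly:
  assumes deg: "degree f \<le> n"
  shows "(\<Sum>k\<le>n. (-1) ^ k * qbinom_ext q n k * q ^ (k choose 2) * poly f ((1/q) ^ k))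
       = coeff f n * qpoch ((1/q) ^ n) q n"
proof -
  have poly_f: "poly f x = (\<Sum>j\<le>n. coeff f j * x ^ j)" for x
    unfolding poly_altdef by (rule sum.mono_neutral_left) (use deg in \<open>auto simp: coeff_eq_0\<close>)
  have "(\<Sum>k\<le>n. (-1) ^ k * qbinom_ext q n k * q ^ (k choose 2) * poly f ((1/q) ^ k))
     = (\<Sum>k\<le>n. \<Sum>j\<le>n. coeff f j * ((-1) ^ k * qbinom_ext q n k * q ^ (k choose 2) * ((1/q) ^ j) ^ k))"
    by (simp add: poly_f sum_distrib_left power_mult[symmetric] mult.commute mult.left_commute)
  also have "\<dots> = (\<Sum>j\<le>n. coeff f j * qpoch ((1/q) ^ j) q n)"
    by (subst sum.swap) (simp add: sum_distrib_left[symmetric] qpoch_eq_qbinom_sum)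
  also have "\<dots> = coeff f n * qpoch ((1/q) ^ n) q n"
    using q_pos by (subst sum.remove[of _ n]) (auto simp: qpoch_inverse_power_eq_0 intro!: sum.neutral)
  finally show ?thesis .
qed

lemma qbinom_sum_monic:
  assumes "m \<le> n"
  shows "(\<Sum>k\<le>n. (-1) ^ k * qbinom_ext q n k * q ^ (k choose 2) * poly (\<Prod>i<m. [:-a i, 1:]) ((1/q) ^ k))
       = (if m = n then qpoch ((1/q) ^ n) q n else 0)"
  using qbinom_sum_poly[of "\<Prod>i<m. [:-a i, 1:]" n] monic_linear_factors[of a m] assms
  by (auto simp: coeff_eq_0)

lemma qbinom_partial_fractions:
  assumes "0 \<le> z" "z < 1"
  shows "(\<Sum>j\<le>N. (-1) ^ j * qbinom_ext q N j * q ^ (Suc j choose 2) / (1 - z * q ^ j))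
       = qpoch q q N / qpoch z q (Suc N)"
  using assms
proof (induction N arbitrary: z)
  case 0
  then show ?case by (simp add: qpoch_Suc numeral_2_eq_2)
next
  case (Suc N)
  define F where "F N z j = (-1) ^ j * qbinom_ext q N j * q ^ (Suc j choose 2) / (1 - z * q ^ j)"
    for N z j
  have zq: "0 \<le> z * q" "z * q < 1"
    using Suc.prems q_pos q_lt_1 by auto (smt (verit) mult_left_le)
  have F0: "F M z 0 = 1 / (1 - z)" for M by (simp add: F_def numeral_2_eq_2)
  have F_Suc: "F (Suc N) z (Suc j) = F N z (Suc j) - q ^ Suc N * F N (z * q) j" if "j \<le> N" for j
  proof -
    have pascal: "qbinom_ext q (Suc N) (Suc j) = qbinom_ext q N (Suc j) + q ^ (N - j) * qbinom_ext q N j"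
      using qbinom_ext_pascal[of "Suc j" N] by simp
    have exponent: "q ^ (N - j) * q ^ (Suc (Suc j) choose 2) = q ^ Suc N * q ^ (Suc j choose 2)"
      using that by (simp add: Suc_choose_two[of "Suc j"] flip: power_add)
    have "F (Suc N) z (Suc j)
        = ((-1) ^ Suc j * qbinom_ext q N (Suc j) * q ^ (Suc (Suc j) choose 2)
           + (-1) ^ Suc j * (q ^ (N - j) * q ^ (Suc (Suc j) choose 2)) * qbinom_ext q N j)
          / (1 - z * q ^ Suc j)"
      unfolding F_def pascal by (simp add: algebra_simps)
    also have "\<dots> = F N z (Suc j) - q ^ Suc N * F N (z * q) j"
      unfolding exponent F_def add_divide_distrib by (simp add: algebra_simps)
    finally show ?thesis .
  qed
  have "(\<Sum>j\<le>Suc N. F (Suc N) z j) = 1 / (1 - z) + (\<Sum>j\<le>N. F (Suc N) z (Suc j))"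
    by (subst sum.atMost_Suc_shift) (simp add: F0)
  also have "\<dots> = 1 / (1 - z) + (\<Sum>j\<le>N. F N z (Suc j)) - q ^ Suc N * (\<Sum>j\<le>N. F N (z * q) j)"
    by (simp add: F_Suc sum_subtractf sum_distrib_left)
  also have "1 / (1 - z) + (\<Sum>j\<le>N. F N z (Suc j)) = (\<Sum>j\<le>N. F N z j)"
  proof -
    have "F N z (Suc N) = 0" by (simp add: F_def qbinom_ext_def)
    then show ?thesis using sum.atMost_Suc_shift[of "F N z" N] by (simp add: F0)
  qed
  also have "(\<Sum>j\<le>N. F N z j) - q ^ Suc N * (\<Sum>j\<le>N. F N (z * q) j)
      = qpoch q q N / qpoch z q (Suc N) - q ^ Suc N * (qpoch q q N / qpoch (z * q) q (Suc N))"
    using Suc.IH Suc.prems zq by (simp add: F_def)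
  also have "\<dots> = qpoch q q (Suc N) / qpoch z q (Suc (Suc N))"
  proof -
    define X where "X = qpoch (z * q) q N"
    define x where "x = q ^ Suc N"
    have "X > 0" unfolding X_def using zq q_pos q_lt_1 by (intro qpoch_pos) auto
    have "x \<le> 1" unfolding x_def using q_pos q_lt_1 by (intro power_le_one) auto
    then have "z * x < 1" using mult_left_le[of x z] Suc.prems by linarith
    have Q1: "qpoch z q (Suc N) = (1 - z) * X" by (simp add: X_def qpoch_Suc_left)
    have Q2: "qpoch (z * q) q (Suc N) = X * (1 - z * x)" by (simp add: X_def x_def qpoch_Suc mult_ac)
    have Q3: "qpoch z q (Suc (Suc N)) = (1 - z) * X * (1 - z * x)"
      by (simp only: qpoch_Suc_left[of z q "Suc N"] Q2 mult.assoc)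
    have QN: "qpoch q q (Suc N) = qpoch q q N * (1 - x)" by (simp add: x_def qpoch_Suc)
    have "Q / ((1 - z) * X) - x * (Q / (X * (1 - z * x))) = Q * (1 - x) / ((1 - z) * X * (1 - z * x))"
      for Q
    proof -
      have "1 - z \<noteq> 0" "1 - z * x \<noteq> 0" "X \<noteq> 0" using \<open>X > 0\<close> \<open>z * x < 1\<close> Suc.prems by auto
      then show ?thesis by (simp add: divide_simps) (simp add: algebra_simps)
    qed
    then show ?thesis unfolding Q1 Q2 Q3 QN x_def[symmetric] .
  qed
  finally show ?case unfolding F_def .
qed

lemma qbinom_sum_ratio:
  assumes p: "0 \<le> p" "p < 1"
  shows "(\<Sum>k\<le>Suc N. (-1) ^ k * qbinom_ext q (Suc N) k * q ^ (k choose 2) * ((1 - q ^ k) / (1 - p * q ^ k)))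
       = - qpoch q q (Suc N) / qpoch (p * q) q (Suc N)"
proof -
  have pq: "0 \<le> p * q" "p * q < 1" using p q_pos q_lt_1 by auto (smt (verit) mult_left_le)
  have "(\<Sum>k\<le>Suc N. (-1) ^ k * qbinom_ext q (Suc N) k * q ^ (k choose 2) * ((1 - q ^ k) / (1 - p * q ^ k)))
     = (\<Sum>j\<le>N. (-1) ^ Suc j * (qbinom_ext q (Suc N) (Suc j) * (1 - q ^ Suc j))
          * q ^ (Suc j choose 2) / (1 - (p * q) * q ^ j))"
    by (subst sum.atMost_Suc_shift) (simp add: mult_ac)
  also have "\<dots> = - (1 - q ^ Suc N)
      * (\<Sum>j\<le>N. (-1) ^ j * qbinom_ext q N j * q ^ (Suc j choose 2) / (1 - (p * q) * q ^ j))"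
    unfolding qbinom_ext_absorb by (simp add: sum_distrib_left algebra_simps)
  also have "\<dots> = - qpoch q q (Suc N) / qpoch (p * q) q (Suc N)"
  proof -
    have "(x - 1) * Q / D = - (Q * (1 - x) / D)" for x Q D :: real
      by (metis minus_diff_eq minus_divide_left mult.commute mult_minus_right)
    then show ?thesis unfolding qbinom_partial_fractions[OF pq] by (simp add: qpoch_Suc)
  qed
  finally show ?thesis .
qed

section \<open>Infinite \<open>q\<close>-Pochhammer symbols\<close>

lemma convergent_prod_qpoch_inf: "convergent_prod (\<lambda>k. 1 - a * q ^ k)"
proof -
  have "summable (\<lambda>k. \<bar>a\<bar> * q ^ k)"
    using q_pos q_lt_1 by (intro summable_mult summable_geometric) auto
  then have "summable (\<lambda>k. norm ((1 - a * q ^ k) - 1))"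
    using q_pos by (simp add: abs_mult power_abs)
  then show ?thesis
    by (intro abs_convergent_prod_imp_convergent_prod summable_imp_abs_convergent_prod)
qed

lemma qpoch_inf_LIMSEQ: "(\<lambda>n. \<Prod>i\<le>n. 1 - a * q ^ i) \<longlonglongrightarrow> qpoch_inf a q"
  unfolding qpoch_inf_def by (rule convergent_prod_LIMSEQ[OF convergent_prod_qpoch_inf])

lemma qpoch_inf_step: "qpoch_inf a q = (1 - a) * qpoch_inf (a * q) q"
proof -
  have shift: "(\<Prod>i\<le>Suc n. 1 - a * q ^ i) = (1 - a) * (\<Prod>i\<le>n. 1 - a * q * q ^ i)" for n
    by (subst prod.atMost_Suc_shift) (simp add: mult.assoc)
  have "(\<lambda>n. \<Prod>i\<le>Suc n. 1 - a * q ^ i) \<longlonglongrightarrow> qpoch_inf a q"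
    using qpoch_inf_LIMSEQ by (rule LIMSEQ_Suc)
  moreover have "(\<lambda>n. \<Prod>i\<le>Suc n. 1 - a * q ^ i) \<longlonglongrightarrow> (1 - a) * qpoch_inf (a * q) q"
    unfolding shift by (intro tendsto_mult tendsto_const qpoch_inf_LIMSEQ)
  ultimately show ?thesis by (rule LIMSEQ_unique)
qed

lemma qpoch_inf_split: "qpoch_inf a q = qpoch a q n * qpoch_inf (a * q ^ n) q"
proof (induction n)
  case (Suc n)
  have "qpoch_inf (a * q ^ n) q = (1 - a * q ^ n) * qpoch_inf (a * q ^ Suc n) q"
    using qpoch_inf_step[of "a * q ^ n"] by (simp add: mult_ac)
  then show ?case using Suc by (simp add: qpoch_Suc mult_ac)
qed simp

lemma qpoch_inf_1: "qpoch_inf 1 q = 0"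
  using qpoch_inf_step[of 1] by simp

lemma qpoch_inf_pos:
  assumes "0 \<le> a" "a < 1"
  shows "qpoch_inf a q > 0"
proof -
  have factor_pos: "1 - a * q ^ i > 0" for i
  proof -
    have "a * q ^ i \<le> a" using assms q_pos q_lt_1 by (simp add: mult_left_le power_le_one)
    then show ?thesis using assms by simp
  qed
  have "qpoch_inf a q \<noteq> 0" unfolding qpoch_inf_def
    by (rule prodinf_nonzero[OF convergent_prod_qpoch_inf]) (use factor_pos in \<open>auto simp: less_le\<close>)
  moreover have "qpoch_inf a q \<ge> 0"
    by (rule LIMSEQ_le_const[OF qpoch_inf_LIMSEQ])
      (use factor_pos in \<open>auto intro!: exI[of _ 0] prod_nonneg prod_pos less_imp_le\<close>)
  ultimately show ?thesis by simp
qed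

lemma qpoch_inf_antimono:
  assumes "0 \<le> a" "a \<le> b" "b \<le> 1"
  shows "qpoch_inf b q \<le> qpoch_inf a q"
proof -
  have factors: "0 \<le> 1 - b * q ^ i \<and> 1 - b * q ^ i \<le> 1 - a * q ^ i" for i
  proof -
    have "q ^ i \<le> 1" "q ^ i \<ge> 0" using q_pos q_lt_1 by (auto simp: power_le_one)
    then show ?thesis using assms by (auto intro: mult_le_one mult_right_mono)
  qed
  show ?thesis
    by (rule LIMSEQ_le[OF qpoch_inf_LIMSEQ qpoch_inf_LIMSEQ])
      (use factors in \<open>auto intro!: exI[of _ 0] prod_mono\<close>)
qed

end

section \<open>The generalized Stieltjes--Wigert moments\<close>

definition sw_coeff_unnorm :: "real \<Rightarrow> real \<Rightarrow> nat \<Rightarrow> nat \<Rightarrow> real" where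
  "sw_coeff_unnorm p q n k = (-1) ^ k * qbinom n k q * q powr (real k ^ 2 + real k / 2) / qpoch p q k"

lemma sw_coeff_eq_unnorm:
  "sw_coeff p q k n
     = (-1) ^ n * q powr (real n / 2 + 1/4) * sqrt (qpoch p q n / qpoch q q n) * sw_coeff_unnorm p q n k"
  by (simp add: sw_coeff_def sw_coeff_unnorm_def)

definition sw_pairing_diag :: "real \<Rightarrow> nat \<Rightarrow> real" where
  "sw_pairing_diag q n = q powr (- (real (n + 1) ^ 2) / 2) * qpoch ((1/q) ^ n) q n"

definition qpoch_inf_ratio :: "real \<Rightarrow> real \<Rightarrow> nat \<Rightarrow> real" where
  "qpoch_inf_ratio p q j = qpoch_inf (q ^ j) q / qpoch_inf (p * q ^ j) q"

definition sw_mod_coeff_unnorm :: "real \<Rightarrow> real \<Rightarrow> nat \<Rightarrow> nat \<Rightarrow> real" where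
  "sw_mod_coeff_unnorm p q n k =
     sw_coeff_unnorm p q n k * (1 - (1 - q ^ k) / (1 - p * q ^ k) * qpoch_inf_ratio p q (n + 1))"

definition sw_mod_normalizer :: "real \<Rightarrow> real \<Rightarrow> nat \<Rightarrow> real" where
  "sw_mod_normalizer p q n = (-1) ^ n * q powr (real n / 2 + 1/4) * sqrt (qpoch p q n / qpoch q q n)
      * ((1 - qpoch_inf (q ^ n) q / qpoch_inf (p * q ^ n) q)
         * (1 - qpoch_inf (q ^ (n + 1)) q / qpoch_inf (p * q ^ (n + 1)) q)) powr (-1/2)"

locale sw_params = q_range +
  fixes p :: real
  assumes p_nonneg: "0 \<le> p" and p_lt_1: "p < 1"
begin

lemma p_power_lt_1: "p * q ^ j < 1"
  using p_nonneg p_lt_1 q_pos q_lt_1 by (smt (verit) mult_left_le power_le_one zero_le_power)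

lemma qpoch_p_pos: "qpoch p q n > 0"
  using q_pos q_lt_1 p_lt_1 by (intro qpoch_pos) auto

lemma sw_powr_split:
  "q powr (real k ^ 2 + real k / 2) * q powr (- (real (m + k + 1) ^ 2) / 2)
     = q powr (- (real (m + 1) ^ 2) / 2) * q ^ (k choose 2) * (1/q) ^ (k * m)"
proof -
  have exponent: "real k ^ 2 + real k / 2 + (- (real (m + k + 1) ^ 2) / 2)
     = - (real (m + 1) ^ 2) / 2 + real (k choose 2) + (- real (k * m))"
    by (simp add: real_choose_two power2_eq_square field_simps)
  have "q ^ (k choose 2) = q powr real (k choose 2)" "(1/q) ^ (k * m) = q powr (- real (k * m))"
    using q_pos by (simp_all add: powr_realpow powr_minus power_one_over inverse_eq_divide
        flip: of_nat_mult)
  then show ?thesis by (simp only: powr_add[symmetric] exponent)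
qed

lemma sw_moment_mult_coeff:
  assumes "k \<le> n"
  shows "sw_coeff_unnorm p q n k * sw_moment p q (m + k)
       = q powr (- (real (m + 1) ^ 2) / 2) *
         ((-1) ^ k * qbinom_ext q n k * q ^ (k choose 2) * poly (\<Prod>i<m. [:-(p * q ^ i), 1:]) ((1/q) ^ k))"
proof -
  have "poly (\<Prod>i<m. [:-(p * q ^ i), 1:]) ((1/q) ^ k) = qpoch (p * q ^ k) q m * (1/q) ^ (k * m)"
    using q_pos by (simp add: poly_prod qpoch_shift_mult_power)
  moreover have "sw_coeff_unnorm p q n k * sw_moment p q (m + k)
      = (-1) ^ k * qbinom_ext q n k * qpoch (p * q ^ k) q m *
        (q powr (real k ^ 2 + real k / 2) * q powr (- (real (m + k + 1) ^ 2) / 2))"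
    using qpoch_p_pos[of k] assms
    by (simp add: sw_coeff_unnorm_def sw_moment_def qpoch_add qbinom_ext_def field_simps)
  ultimately show ?thesis unfolding sw_powr_split by (simp add: algebra_simps)
qed

lemma sw_moment_mult_twisted_coeff:
  assumes "k \<le> n"
  shows "sw_coeff_unnorm p q n k * ((1 - q ^ k) / (1 - p * q ^ k)) * sw_moment p q (Suc m + k)
       = q powr (- (real (Suc m + 1) ^ 2) / 2) *
         ((-1) ^ k * qbinom_ext q n k * q ^ (k choose 2) *
           poly (\<Prod>i<Suc m. [:-(if i = 0 then 1 else p * q ^ i), 1:]) ((1/q) ^ k))"
proof -
  have "1 - p * q ^ k > 0" using p_power_lt_1 by simp
  have split: "qpoch p q (Suc m + k) = qpoch p q k * (1 - p * q ^ k) * qpoch (p * q * q ^ k) q m"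
    using qpoch_add[of p q "Suc k" m] by (simp add: add.commute qpoch_Suc mult_ac)
  define Q where "Q = qpoch (p * q * q ^ k) q m"
  have "sw_coeff_unnorm p q n k * ((1 - q ^ k) / (1 - p * q ^ k)) * sw_moment p q (Suc m + k)
      = (-1) ^ k * qbinom_ext q n k * Q * (1 - q ^ k) *
        (q powr (real k ^ 2 + real k / 2) * q powr (- (real (Suc m + k + 1) ^ 2) / 2))"
    unfolding sw_coeff_unnorm_def sw_moment_def split qbinom_ext_def Q_def
    using qpoch_p_pos[of k] \<open>1 - p * q ^ k > 0\<close> assms by (simp add: field_simps)
  also have "\<dots> = q powr (- (real (Suc m + 1) ^ 2) / 2) *
      ((-1) ^ k * qbinom_ext q n k * q ^ (k choose 2) * (Q * ((1 - q ^ k) * (1/q) ^ (k * Suc m))))"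
    unfolding sw_powr_split by (simp add: algebra_simps)
  also have "(1 - q ^ k) * (1/q) ^ (k * Suc m) = ((1/q) ^ k - 1) * (1/q) ^ (k * m)"
    using q_pos by (simp add: power_add power_one_over field_simps)
  also have "Q * (((1/q) ^ k - 1) * (1/q) ^ (k * m))
      = poly (\<Prod>i<Suc m. [:-(if i = 0 then 1 else p * q ^ i), 1:]) ((1/q) ^ k)"
  proof -
    have "poly (\<Prod>i<Suc m. [:-(if i = 0 then 1 else p * q ^ i), 1:]) x
        = (x - 1) * (\<Prod>i<m. x - p * q * q ^ i)" for x
      by (subst prod.lessThan_Suc_shift) (simp add: poly_prod mult_ac left_diff_distrib)
    then show ?thesis
      using q_pos qpoch_shift_mult_power[of q "p * q" k m] by (simp add: Q_def mult_ac)
  qed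
  finally show ?thesis .
qed

lemma moment_pairing_sw_coeff:
  assumes "m \<le> n"
  shows "moment_pairing (sw_moment p q) m n (sw_coeff_unnorm p q n)
       = (if m = n then sw_pairing_diag q n else 0)"
proof -
  have "moment_pairing (sw_moment p q) m n (sw_coeff_unnorm p q n)
      = q powr (- (real (m + 1) ^ 2) / 2) * (\<Sum>k\<le>n. (-1) ^ k * qbinom_ext q n k * q ^ (k choose 2)
          * poly (\<Prod>i<m. [:-(p * q ^ i), 1:]) ((1/q) ^ k))"
    unfolding moment_pairing_def sum_distrib_left
    by (intro sum.cong refl) (simp add: sw_moment_mult_coeff mult.commute[of "sw_moment _ _ _"])
  then show ?thesis unfolding qbinom_sum_monic[OF assms] by (simp add: sw_pairing_diag_def)
qed

lemma moment_pairing_sw_twisted_coeff: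
  assumes "Suc m \<le> n"
  shows "moment_pairing (sw_moment p q) (Suc m) n
           (\<lambda>k. sw_coeff_unnorm p q n k * ((1 - q ^ k) / (1 - p * q ^ k)))
       = (if Suc m = n then sw_pairing_diag q n else 0)"
proof -
  have "moment_pairing (sw_moment p q) (Suc m) n
        (\<lambda>k. sw_coeff_unnorm p q n k * ((1 - q ^ k) / (1 - p * q ^ k)))
      = q powr (- (real (Suc m + 1) ^ 2) / 2) * (\<Sum>k\<le>n. (-1) ^ k * qbinom_ext q n k * q ^ (k choose 2)
          * poly (\<Prod>i<Suc m. [:-(if i = 0 then 1 else p * q ^ i), 1:]) ((1/q) ^ k))"
    unfolding moment_pairing_def sum_distrib_left
  proof (intro sum.cong refl)
    fix k assume "k \<in> {..n}"
    then show "sw_moment p q (Suc m + k) * (sw_coeff_unnorm p q n k * ((1 - q ^ k) / (1 - p * q ^ k)))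
      = q powr (- (real (Suc m + 1) ^ 2) / 2) * ((-1) ^ k * qbinom_ext q n k * q ^ (k choose 2)
          * poly (\<Prod>i<Suc m. [:-(if i = 0 then 1 else p * q ^ i), 1:]) ((1/q) ^ k))"
      using sw_moment_mult_twisted_coeff[of k n m] by (simp only: atMost_iff mult.commute)
  qed
  then show ?thesis unfolding qbinom_sum_monic[OF assms] by (auto simp: sw_pairing_diag_def)
qed

lemma moment_pairing_sw_twisted_coeff_0:
  "moment_pairing (sw_moment p q) 0 (Suc N)
       (\<lambda>k. sw_coeff_unnorm p q (Suc N) k * ((1 - q ^ k) / (1 - p * q ^ k)))
     = - (q powr (-1/2)) * qpoch q q (Suc N) / qpoch (p * q) q (Suc N)"
proof -
  have "moment_pairing (sw_moment p q) 0 (Suc N)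
        (\<lambda>k. sw_coeff_unnorm p q (Suc N) k * ((1 - q ^ k) / (1 - p * q ^ k)))
      = q powr (-1/2) * (\<Sum>k\<le>Suc N. (-1) ^ k * qbinom_ext q (Suc N) k * q ^ (k choose 2)
          * ((1 - q ^ k) / (1 - p * q ^ k)))"
    unfolding moment_pairing_def sum_distrib_left
    using sw_moment_mult_coeff[of _ "Suc N" 0] by (intro sum.cong) (simp_all add: algebra_simps)
  also have "\<dots> = q powr (-1/2) * (- qpoch q q (Suc N) / qpoch (p * q) q (Suc N))"
    by (simp only: qbinom_sum_ratio[OF p_nonneg p_lt_1])
  finally show ?thesis by simp
qed

lemma qpoch_inf_p_power_pos: "qpoch_inf (p * q ^ j) q > 0"
  using p_nonneg q_pos p_power_lt_1 by (intro qpoch_inf_pos) auto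

lemma qpoch_inf_power_less: "qpoch_inf (q ^ j) q < qpoch_inf (p * q ^ j) q"
proof -
  have "qpoch_inf (q ^ Suc j) q \<le> qpoch_inf (p * q ^ Suc j) q"
    using p_nonneg p_lt_1 q_pos q_lt_1
    by (intro qpoch_inf_antimono) (auto simp: mult_le_one power_le_one simp del: power_Suc)
  moreover have "1 - q ^ j < 1 - p * q ^ j"
    using p_lt_1 q_pos by simp
  moreover have "0 \<le> 1 - q ^ j" using q_pos q_lt_1 by (simp add: power_le_one)
  ultimately have "(1 - q ^ j) * qpoch_inf (q ^ Suc j) q < (1 - p * q ^ j) * qpoch_inf (p * q ^ Suc j) q"
    using qpoch_inf_p_power_pos[of "Suc j"]
    by (smt (verit) mult_le_cancel_left mult_strict_right_mono)
  then show ?thesis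
    using qpoch_inf_step[of "q ^ j"] qpoch_inf_step[of "p * q ^ j"] by (simp add: mult_ac)
qed

lemma Delta_pos: "Delta p q j > 0"
  using qpoch_inf_power_less[of j] by (simp add: Delta_def)

lemma one_minus_qpoch_inf_ratio: "1 - qpoch_inf_ratio p q j = Delta p q j / qpoch_inf (p * q ^ j) q"
  using qpoch_inf_p_power_pos[of j] by (simp add: qpoch_inf_ratio_def Delta_def field_simps)

lemma qpoch_inf_ratio_less_1: "qpoch_inf_ratio p q j < 1"
  using one_minus_qpoch_inf_ratio[of j] Delta_pos[of j] qpoch_inf_p_power_pos[of j]
  by (metis diff_gt_0_iff_gt divide_pos_pos)

lemma qpoch_inf_ratio_0: "qpoch_inf_ratio p q 0 = 0"
  by (simp add: qpoch_inf_ratio_def qpoch_inf_1)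

lemma qpoch_inf_ratio_step:
  "(1 - q ^ j) / (1 - p * q ^ j) * qpoch_inf_ratio p q (j + 1) = qpoch_inf_ratio p q j"
proof -
  have step: "qpoch_inf (q ^ j) q = (1 - q ^ j) * qpoch_inf (q ^ (j + 1)) q"
    "qpoch_inf (p * q ^ j) q = (1 - p * q ^ j) * qpoch_inf (p * q ^ (j + 1)) q"
    using qpoch_inf_step[of "q ^ j"] qpoch_inf_step[of "p * q ^ j"] by (simp_all add: mult_ac)
  show ?thesis
    unfolding qpoch_inf_ratio_def step
    using p_power_lt_1[of j] qpoch_inf_p_power_pos[of "j + 1"] by (simp add: field_simps)
qed

lemma qpoch_inf_ratio_eq_qpoch:
  "qpoch_inf_ratio p q (n + 1) * (qpoch q q n / qpoch (p * q) q n)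
     = qpoch_inf q q / qpoch_inf (p * q) q"
proof -
  have "qpoch (p * q) q n > 0"
    using q_pos q_lt_1 p_power_lt_1[of 1] by (intro qpoch_pos) auto
  then show ?thesis
    using qpoch_inf_split[of q n] qpoch_inf_split[of "p * q" n] qpoch_inf_p_power_pos[of "n + 1"]
    by (simp add: qpoch_inf_ratio_def field_simps)
qed

lemma sw_coeff_unnorm_0: "sw_coeff_unnorm p q n 0 = 1"
  using qpoch_q_pos[of n] q_pos by (simp add: sw_coeff_unnorm_def qbinom_def)

lemma sw_moment_mod_eq_fun_upd:
  "sw_moment_mod p q = (sw_moment p q)(0 := q powr (-1/2) * (1 - qpoch_inf_ratio p q 1))"
  by (auto simp: sw_moment_mod_def qpoch_inf_ratio_def)

lemma moment_pairing_sw_mod_coeff: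
  assumes "m \<le> n"
  shows "moment_pairing (sw_moment_mod p q) m n (sw_mod_coeff_unnorm p q n)
       = (if m = n then (1 - qpoch_inf_ratio p q (n + 1)) * sw_pairing_diag q n else 0)"
proof -
  define A where "A = qpoch_inf_ratio p q (n + 1)"
  define twisted where "twisted k = sw_coeff_unnorm p q n k * ((1 - q ^ k) / (1 - p * q ^ k))" for k
  have "sw_mod_coeff_unnorm p q n = (\<lambda>k. sw_coeff_unnorm p q n k - A * twisted k)"
    by (simp add: fun_eq_iff sw_mod_coeff_unnorm_def A_def twisted_def algebra_simps)
  then have split: "moment_pairing u m n (sw_mod_coeff_unnorm p q n)
      = moment_pairing u m n (sw_coeff_unnorm p q n) - A * moment_pairing u m n twisted" for u m
    by (simp add: moment_pairing_diff)
  have "sw_mod_coeff_unnorm p q n 0 = 1"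
    by (simp add: sw_mod_coeff_unnorm_def sw_coeff_unnorm_0)
  then have pairing_mod: "moment_pairing (sw_moment_mod p q) m n (sw_mod_coeff_unnorm p q n)
      = moment_pairing (sw_moment p q) m n (sw_mod_coeff_unnorm p q n)
        - (if m = 0 then q powr (-1/2) * qpoch_inf_ratio p q 1 else 0)"
    unfolding sw_moment_mod_eq_fun_upd moment_pairing_fun_upd_0 by (simp add: sw_moment_def algebra_simps)
  show ?thesis
  proof (cases m)
    case (Suc m')
    have "moment_pairing (sw_moment p q) m n twisted = (if m = n then sw_pairing_diag q n else 0)"
      unfolding twisted_def Suc using assms Suc by (intro moment_pairing_sw_twisted_coeff) simp
    then show ?thesis
      unfolding pairing_mod split[of "sw_moment p q"] moment_pairing_sw_coeff[OF assms]
      using Suc by (simp add: A_def algebra_simps)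
  next
    case 0
    show ?thesis
    proof (cases n)
      case 0
      then show ?thesis
        using \<open>m = 0\<close> by (simp add: moment_pairing_def sw_mod_coeff_unnorm_def sw_moment_mod_def
            sw_coeff_unnorm_0 sw_pairing_diag_def qpoch_inf_ratio_def algebra_simps)
    next
      case (Suc N)
      have twisted_pairing: "moment_pairing (sw_moment p q) 0 n twisted
          = - (q powr (-1/2)) * qpoch q q n / qpoch (p * q) q n"
        unfolding twisted_def Suc by (rule moment_pairing_sw_twisted_coeff_0)
      have ratio: "qpoch_inf_ratio p q 1 = A * (qpoch q q n / qpoch (p * q) q n)"
        unfolding A_def qpoch_inf_ratio_eq_qpoch by (simp add: qpoch_inf_ratio_def)
      have "moment_pairing (sw_moment_mod p q) m n (sw_mod_coeff_unnorm p q n)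
          = - A * (- (q powr (-1/2)) * qpoch q q n / qpoch (p * q) q n)
            - q powr (-1/2) * qpoch_inf_ratio p q 1"
        unfolding pairing_mod split[of "sw_moment p q"] moment_pairing_sw_coeff[OF assms]
        using \<open>m = 0\<close> Suc twisted_pairing by simp
      also have "\<dots> = 0" unfolding ratio by simp
      finally show ?thesis using \<open>m = 0\<close> Suc by simp
    qed
  qed
qed

lemma sw_coeff_unnorm_diag:
  "sw_coeff_unnorm p q n n = (-1) ^ n * q powr (real n ^ 2 + real n / 2) / qpoch p q n"
  using qpoch_q_pos[of n] by (simp add: sw_coeff_unnorm_def qbinom_def)

lemma sw_coeff_unnorm_diag_nonzero: "sw_coeff_unnorm p q n n \<noteq> 0"
  using qpoch_p_pos[of n] q_pos by (simp add: sw_coeff_unnorm_diag)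

lemma sw_mod_coeff_unnorm_diag:
  "sw_mod_coeff_unnorm p q n n = sw_coeff_unnorm p q n n * (1 - qpoch_inf_ratio p q n)"
  unfolding sw_mod_coeff_unnorm_def qpoch_inf_ratio_step ..

lemma sw_coeff_unnorm_diag_mult_pairing:
  "sw_coeff_unnorm p q n n * sw_pairing_diag q n = q powr (- real n - 1/2) * qpoch q q n / qpoch p q n"
proof -
  have choose: "(1/q) ^ (Suc n choose 2) = q powr (- real (Suc n choose 2))"
    using q_pos by (simp add: powr_minus powr_realpow power_one_over inverse_eq_divide)
  have exponent: "real n ^ 2 + real n / 2 + (- (real (n + 1) ^ 2) / 2) + (- real (Suc n choose 2))
      = - real n - 1/2"
    by (simp add: real_choose_two power2_eq_square field_simps)
  have "sw_coeff_unnorm p q n n * sw_pairing_diag q n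
      = ((-1) ^ n * (-1) ^ n) * (q powr (real n ^ 2 + real n / 2) * q powr (- (real (n + 1) ^ 2) / 2)
          * q powr (- real (Suc n choose 2))) * qpoch q q n / qpoch p q n"
    unfolding sw_coeff_unnorm_diag sw_pairing_diag_def qpoch_inverse_power_diag[OF q_nonzero] choose
    by (simp add: algebra_simps)
  also have "\<dots> = q powr (- real n - 1/2) * qpoch q q n / qpoch p q n"
    unfolding powr_add[symmetric] exponent by (simp flip: power_mult_distrib)
  finally show ?thesis .
qed

lemma orthogonal_coeffs_sw: "orthogonal_coeffs (sw_moment p q) n (sw_coeff_unnorm p q n)"
  using sw_coeff_unnorm_diag_nonzero moment_pairing_sw_coeff
  by (simp add: orthogonal_coeffs_def)

lemma orthogonal_coeffs_sw_mod: "orthogonal_coeffs (sw_moment_mod p q) n (sw_mod_coeff_unnorm p q n)"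
  using sw_coeff_unnorm_diag_nonzero qpoch_inf_ratio_less_1[of n] moment_pairing_sw_mod_coeff
  by (simp add: orthogonal_coeffs_def sw_mod_coeff_unnorm_diag)

lemma sw_mod_coeff_norm_eq:
  "sw_mod_coeff_unnorm p q n n * moment_pairing (sw_moment_mod p q) n n (sw_mod_coeff_unnorm p q n)
     = (1 - qpoch_inf_ratio p q n) * (1 - qpoch_inf_ratio p q (n + 1))
       * (q powr (- real n - 1/2) * qpoch q q n / qpoch p q n)"
  by (simp add: moment_pairing_sw_mod_coeff sw_mod_coeff_unnorm_diag
      flip: sw_coeff_unnorm_diag_mult_pairing)

lemma sw_mod_coeff_norm_pos:
  "sw_mod_coeff_unnorm p q n n * moment_pairing (sw_moment_mod p q) n n (sw_mod_coeff_unnorm p q n) > 0"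
  unfolding sw_mod_coeff_norm_eq
  using qpoch_inf_ratio_less_1[of n] qpoch_inf_ratio_less_1[of "n + 1"] qpoch_q_pos[of n]
    qpoch_p_pos[of n] q_pos
  by simp

lemma hankel_det_sw_moment_mod:
  "hankel_det (sw_moment_mod p q) n = (1 - qpoch_inf_ratio p q (n + 1)) * hankel_det (sw_moment p q) n"
proof -
  define r where "r n = sw_pairing_diag q n / sw_coeff_unnorm p q n n" for n
  define a where "a n = 1 - qpoch_inf_ratio p q n" for n
  have "a n > 0" for n using qpoch_inf_ratio_less_1[of n] by (simp add: a_def)
  have step: "hankel_det (sw_moment p q) n = r n * hankel_det_prev (sw_moment p q) n" for n
    using hankel_det_eq_pairing_mult_prev[OF orthogonal_coeffs_sw, of n]
    by (simp add: moment_pairing_sw_coeff r_def)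
  have step_mod: "hankel_det (sw_moment_mod p q) n
      = a (n + 1) / a n * r n * hankel_det_prev (sw_moment_mod p q) n" for n
    using hankel_det_eq_pairing_mult_prev[OF orthogonal_coeffs_sw_mod, of n]
    by (simp add: moment_pairing_sw_mod_coeff sw_mod_coeff_unnorm_diag a_def r_def)
  show ?thesis
  proof (induction n)
    case 0
    show ?case using step[of 0] step_mod[of 0]
      by (simp add: hankel_det_prev_def a_def qpoch_inf_ratio_0)
  next
    case (Suc n)
    then show ?case using step[of "Suc n"] step_mod[of "Suc n"] \<open>a (Suc n) > 0\<close>
      by (simp add: hankel_det_prev_def a_def)
  qed
qed

lemma sgn_sw_mod_coeff_unnorm_diag: "sgn (sw_mod_coeff_unnorm p q n n) = (-1) ^ n"
proof -
  define c where "c = q powr (real n ^ 2 + real n / 2) / qpoch p q n * (1 - qpoch_inf_ratio p q n)"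
  have "sw_mod_coeff_unnorm p q n n = (-1) ^ n * c"
    by (simp add: c_def sw_mod_coeff_unnorm_diag sw_coeff_unnorm_diag)
  moreover have "c > 0"
    using q_pos qpoch_p_pos[of n] qpoch_inf_ratio_less_1[of n] by (simp add: c_def)
  ultimately show ?thesis by (simp add: sgn_mult)
qed

lemma sw_mod_normalizer_eq_inverse_sqrt_norm:
  "sw_mod_normalizer p q n = (-1) ^ n / sqrt (sw_mod_coeff_unnorm p q n n
     * moment_pairing (sw_moment_mod p q) n n (sw_mod_coeff_unnorm p q n))"
proof -
  define X where "X = (1 - qpoch_inf_ratio p q n) * (1 - qpoch_inf_ratio p q (n + 1))"
  define Y where "Y = q powr (- real n - 1/2)"
  define Z where "Z = qpoch q q n / qpoch p q n"
  have "X > 0" "Z > 0"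
    using qpoch_inf_ratio_less_1[of n] qpoch_inf_ratio_less_1[of "n + 1"] qpoch_q_pos[of n]
      qpoch_p_pos[of n] by (simp_all add: X_def Z_def)
  have "X powr (-1/2) = 1 / sqrt X"
    using \<open>X > 0\<close> by (simp add: powr_minus_divide powr_half_sqrt)
  moreover have "sqrt Y = q powr ((- real n - 1/2) * (1/2))"
    using q_pos by (simp add: Y_def powr_half_sqrt[symmetric] powr_powr)
  then have "q powr (real n / 2 + 1/4) = 1 / sqrt Y"
    by (simp add: powr_minus_divide[symmetric] algebra_simps)
  moreover have "sqrt (qpoch p q n / qpoch q q n) = 1 / sqrt Z"
    by (simp add: Z_def real_sqrt_divide)
  ultimately have "sw_mod_normalizer p q n = (-1) ^ n / (sqrt X * sqrt Y * sqrt Z)"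
    by (simp add: sw_mod_normalizer_def qpoch_inf_ratio_def X_def)
  also have "sqrt X * sqrt Y * sqrt Z
      = sqrt (sw_mod_coeff_unnorm p q n n * moment_pairing (sw_moment_mod p q) n n (sw_mod_coeff_unnorm p q n))"
  proof -
    have XYZ: "X * (Y * Z)
        = sw_mod_coeff_unnorm p q n n * moment_pairing (sw_moment_mod p q) n n (sw_mod_coeff_unnorm p q n)"
      unfolding sw_mod_coeff_norm_eq X_def Y_def Z_def by simp
    show ?thesis unfolding XYZ[symmetric] by (simp add: real_sqrt_mult)
  qed
  finally show ?thesis .
qed

lemma coeff_orthonormal_poly_sw_mod:
  assumes "k \<le> n"
  shows "coeff (orthonormal_poly (sw_moment_mod p q) n) k
       = sw_mod_normalizer p q n * sw_mod_coeff_unnorm p q n k"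
proof -
  have "hankel_det_prev (sw_moment_mod p q) n > 0"
    using hankel_det_pos[OF orthogonal_coeffs_sw_mod sw_mod_coeff_norm_pos]
    by (simp add: hankel_det_prev_def)
  then show ?thesis
    by (simp add: coeff_orthonormal_poly[OF orthogonal_coeffs_sw_mod _ sw_mod_coeff_norm_pos assms]
        sgn_sw_mod_coeff_unnorm_diag sw_mod_normalizer_eq_inverse_sqrt_norm)
qed

lemma sw_mod_normalizer_eq_Delta:
  "sw_mod_normalizer p q n = (-1) ^ n * q powr (real n / 2 + 1/4) * sqrt (qpoch p q (n + 1) / qpoch q q n)
     * qpoch_inf (p * q ^ (n + 1)) q / sqrt (Delta p q n * Delta p q (n + 1))"
proof -
  define P' where "P' = qpoch_inf (p * q ^ (n + 1)) q"
  define D where "D = Delta p q n * Delta p q (n + 1)"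
  define c where "c = 1 - p * q ^ n"
  have "P' > 0" "D > 0" "c > 0"
    using qpoch_inf_p_power_pos[of "n + 1"] Delta_pos[of n] Delta_pos[of "n + 1"] p_power_lt_1[of n]
    by (simp_all add: P'_def D_def c_def)
  have "qpoch_inf (p * q ^ n) q = c * P'"
    using qpoch_inf_step[of "p * q ^ n"] by (simp add: c_def P'_def mult_ac)
  then have "(1 - qpoch_inf_ratio p q n) * (1 - qpoch_inf_ratio p q (n + 1)) = D / (c * P'\<^sup>2)"
    by (simp add: one_minus_qpoch_inf_ratio D_def P'_def power2_eq_square mult_ac)
  then have "((1 - qpoch_inf_ratio p q n) * (1 - qpoch_inf_ratio p q (n + 1))) powr (-1/2)
      = sqrt c * P' / sqrt D"
    using \<open>P' > 0\<close> \<open>D > 0\<close> \<open>c > 0\<close>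
    by (simp add: powr_minus_divide powr_half_sqrt real_sqrt_divide real_sqrt_mult)
  moreover have "sqrt (qpoch p q (n + 1) / qpoch q q n) = sqrt (qpoch p q n / qpoch q q n) * sqrt c"
    by (simp add: c_def qpoch_Suc real_sqrt_mult[symmetric] field_simps)
  ultimately show ?thesis
    by (simp add: sw_mod_normalizer_def qpoch_inf_ratio_def P'_def D_def)
qed

lemma coeff_orthonormal_poly_sw_mod_eq_sw_coeff:
  assumes "k \<le> n"
  shows "coeff (orthonormal_poly (sw_moment_mod p q) n) k
       = sw_coeff p q k n
         * (qpoch_inf (p * q ^ (n + 1)) q - (1 - q ^ k) / (1 - p * q ^ k) * qpoch_inf (q ^ (n + 1)) q)
         * sqrt ((1 - p * q ^ n) / (Delta p q n * Delta p q (n + 1)))"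
proof -
  define P' where "P' = qpoch_inf (p * q ^ (n + 1)) q"
  define r where "r = (1 - q ^ k) / (1 - p * q ^ k)"
  define s where "s = (-1) ^ n * q powr (real n / 2 + 1/4) * sqrt (qpoch p q n / qpoch q q n)"
  define c where "c = sqrt (1 - p * q ^ n) / sqrt (Delta p q n * Delta p q (n + 1))"
  have "P' > 0" using qpoch_inf_p_power_pos[of "n + 1"] by (simp add: P'_def)
  have "sqrt (qpoch p q (n + 1) / qpoch q q n)
      = sqrt (qpoch p q n / qpoch q q n) * sqrt (1 - p * q ^ n)"
    using qpoch_q_pos[of n] by (simp add: qpoch_Suc real_sqrt_mult[symmetric] field_simps)
  then have "sw_mod_normalizer p q n = s * P' * c"
    unfolding sw_mod_normalizer_eq_Delta s_def c_def P'_def by (simp add: mult_ac)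
  then have "coeff (orthonormal_poly (sw_moment_mod p q) n) k
      = s * sw_coeff_unnorm p q n k * (P' * (1 - r * qpoch_inf_ratio p q (n + 1))) * c"
    unfolding coeff_orthonormal_poly_sw_mod[OF assms] by (simp add: sw_mod_coeff_unnorm_def r_def mult_ac)
  also have "P' * (1 - r * qpoch_inf_ratio p q (n + 1)) = P' - r * qpoch_inf (q ^ (n + 1)) q"
    using \<open>P' > 0\<close> by (simp add: qpoch_inf_ratio_def P'_def field_simps)
  finally show ?thesis
    by (simp add: sw_coeff_eq_unnorm s_def c_def P'_def r_def real_sqrt_divide)
qed

end

theorem theorem4:
  fixes p q :: real
  assumes "0 < q" "q < 1" "0 \<le> p" "p < 1"
  defines "Ct \<equiv> \<lambda>n::nat. (-1) ^ n * q powr (real n / 2 + 1/4) * sqrt (qpoch p q n / qpoch q q n)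
      * ((1 - qpoch_inf (q ^ n) q / qpoch_inf (p * q ^ n) q)
         * (1 - qpoch_inf (q ^ (n + 1)) q / qpoch_inf (p * q ^ (n + 1)) q)) powr (-1/2)"
  shows "(\<forall>n k. k \<le> n \<longrightarrow>
            coeff (orthonormal_poly (sw_moment_mod p q) n) k =
              Ct n * (-1) ^ k * qbinom n k q * q powr (real k ^ 2 + real k / 2) / qpoch p q k
              * (1 - (1 - q ^ k) / (1 - p * q ^ k)
                     * (qpoch_inf (q ^ (n + 1)) q / qpoch_inf (p * q ^ (n + 1)) q)))
       \<and> (\<forall>n. Ct n = (-1) ^ n * q powr (real n / 2 + 1/4) * sqrt (qpoch p q (n + 1) / qpoch q q n)
                      * qpoch_inf (p * q ^ (n + 1)) q / sqrt (Delta p q n * Delta p q (n + 1)))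
       \<and> (\<forall>n k. k \<le> n \<longrightarrow>
            coeff (orthonormal_poly (sw_moment_mod p q) n) k =
              sw_coeff p q k n
              * (qpoch_inf (p * q ^ (n + 1)) q - (1 - q ^ k) / (1 - p * q ^ k) * qpoch_inf (q ^ (n + 1)) q)
              * sqrt ((1 - p * q ^ n) / (Delta p q n * Delta p q (n + 1))))
       \<and> (\<forall>n. hankel_det (sw_moment_mod p q) n =
              Delta p q (n + 1) / qpoch_inf (p * q ^ (n + 1)) q * hankel_det (sw_moment p q) n)"
proof -
  interpret sw_params q p using assms by unfold_locales
  have Ct: "Ct = sw_mod_normalizer p q" unfolding Ct_def sw_mod_normalizer_def ..
  have "coeff (orthonormal_poly (sw_moment_mod p q) n) k =
      Ct n * (-1) ^ k * qbinom n k q * q powr (real k ^ 2 + real k / 2) / qpoch p q k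
      * (1 - (1 - q ^ k) / (1 - p * q ^ k) * (qpoch_inf (q ^ (n + 1)) q / qpoch_inf (p * q ^ (n + 1)) q))"
    if "k \<le> n" for n k
    unfolding coeff_orthonormal_poly_sw_mod[OF that] Ct
    by (simp add: sw_mod_coeff_unnorm_def sw_coeff_unnorm_def qpoch_inf_ratio_def)
  then show ?thesis
    using sw_mod_normalizer_eq_Delta coeff_orthonormal_poly_sw_mod_eq_sw_coeff
      hankel_det_sw_moment_mod one_minus_qpoch_inf_ratio
    by (simp add: Ct)
qed

end
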